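(* Let $(\mathfrak g,\mu,P)$ be a Nijenhuis Lie algebra and $(M,P_M)$ a Nijenhuis representation over it. Then the map $\Psi_M:\mathrm C^\bullet_{\mathrm{Lie}}(\mathfrak g,M)\to\mathrm C^\bullet_{\mathrm{NjO}}(\mathfrak g,M)$ is a chain map, i.e. $\Psi_M\circ\delta_{\mathrm{Lie},M}=\delta_{\mathrm{NjO},M}\circ\Psi_M$.
   Context: All vector spaces are over a field $\mathbf k$ of characteristic $0$. A Nijenhuis Lie algebra is a Lie algebra $(\mathfrak g,\mu=[-,-]_\mu)$ with linear $P:\mathfrak g\to\mathfrak g$ satisfying $[Pa,Pb]_\mu=P([Pa,b]_\mu+[a,Pb]_\mu-P[a,b]_\mu)$. A Nijenhuis representation is a Lie algebra representation $M$ of $(\mathfrak g,\mu)$ (action $ax$) with linear $P_M:M\to M$ such that $P(a)P_M(x)=P_M(P(a)x+aP_M(x)-P_M(ax))$. Chevalley–Eilenberg complex: $\mathrm C^n_{\mathrm{Lie}}(\mathfrak g,M)=\mathrm{Hom}(\wedge^n\mathfrak g,M)$, $\delta_{\mathrm{Lie},M}(f)(a_1,\dots,a_{n+1})=\sum_i(-1)^{i-1}a_if(\dots,\widehat{a_i},\dots)+\sum_{i<j}(-1)^{i+j}f([a_i,a_j]_\mu,\dots,\widehat{a_i},\dots,\widehat{a_j},\dots)$. With $[a,b]_P:=[Pa,b]_\mu+[a,Pb]_\mu-P[a,b]_\mu$, let $\partial$ be the Chevalley–Eilenberg differential of $[-,-]_P$ with coefficients in $M$ with action $a\rhd x:=P(a)x$,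 i.e. $\partial(f)(a_1,\dots,a_{n+1})=\sum_i(-1)^{i-1}P(a_i)f(\dots,\widehat{a_i},\dots)+\sum_{i<j}(-1)^{i+j}f([a_i,a_j]_P,\dots,\widehat{a_i},\dots,\widehat{a_j},\dots)$. Then $\mathrm C^n_{\mathrm{NjO}}(\mathfrak g,M):=\mathrm{Hom}(\wedge^n\mathfrak g,M)$ with $\delta_{\mathrm{NjO},M}(f):=-P_M\circ\delta_{\mathrm{Lie},M}(f)+\partial(f)$. The map $\Psi_M$ is $\mathrm{Id}_M$ in degree $0$, and for $n\ge1$, $f\in\mathrm C^n_{\mathrm{Lie}}(\mathfrak g,M)$: $\Psi_M(f)(a_1,\dots,a_n)=\sum_{k=0}^n\sum_{1\le i_1<\dots<i_k\le n}(-1)^{n-k}P_M^{\,n-k}\big(f(a_1,\dots,P(a_{i_1}),\dots,P(a_{i_k}),\dots,a_n)\big)$, where $P$ is applied exactly to the arguments in positions $i_1,\dots,i_k$. *)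

theory Defs
  imports Complex_Main
begin

text \<open>Vector spaces over a field 'k (characteristic 0) are modelled by types
  'g, 'm of class ab_group_add together with scalar multiplications sg, sm
  satisfying the axioms of the library locale vector_space.
  n-cochains Hom(wedge^n g, M) are modelled as functions f :: 'g list \<Rightarrow> 'm
  that are multilinear and alternating on lists of length n
  (values on lists of other lengths are irrelevant).\<close>

definition lie_algebra ::
  "('k::field \<Rightarrow> 'g::ab_group_add \<Rightarrow> 'g) \<Rightarrow> ('g \<Rightarrow> 'g \<Rightarrow> 'g) \<Rightarrow> bool" where
  "lie_algebra sg br \<longleftrightarrow>
     Vector_Spaces.vector_space sg \<and>
     (\<forall>a. Vector_Spaces.linear sg sg (br a)) \<and> (\<forall>b. Vector_Spaces.linear sg sg (\<lambda>a. br a b)) \<and>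
     (\<forall>a. br a a = 0) \<and>
     (\<forall>a b c. br a (br b c) + br b (br c a) + br c (br a b) = 0)"

definition lie_rep ::
  "('k::field \<Rightarrow> 'g::ab_group_add \<Rightarrow> 'g) \<Rightarrow> ('k \<Rightarrow> 'm::ab_group_add \<Rightarrow> 'm) \<Rightarrow>
   ('g \<Rightarrow> 'g \<Rightarrow> 'g) \<Rightarrow> ('g \<Rightarrow> 'm \<Rightarrow> 'm) \<Rightarrow> bool" where
  "lie_rep sg sm br act \<longleftrightarrow>
     lie_algebra sg br \<and> Vector_Spaces.vector_space sm \<and>
     (\<forall>a. Vector_Spaces.linear sm sm (act a)) \<and> (\<forall>x. Vector_Spaces.linear sg sm (\<lambda>a. act a x)) \<and>
     (\<forall>a b x. act (br a b) x = act a (act b x) - act b (act a x))"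

definition nijenhuis_lie ::
  "('k::field \<Rightarrow> 'g::ab_group_add \<Rightarrow> 'g) \<Rightarrow> ('g \<Rightarrow> 'g \<Rightarrow> 'g) \<Rightarrow> ('g \<Rightarrow> 'g) \<Rightarrow> bool" where
  "nijenhuis_lie sg br P \<longleftrightarrow>
     lie_algebra sg br \<and> Vector_Spaces.linear sg sg P \<and>
     (\<forall>a b. br (P a) (P b) = P (br (P a) b + br a (P b) - P (br a b)))"

definition nijenhuis_rep ::
  "('k::field \<Rightarrow> 'g::ab_group_add \<Rightarrow> 'g) \<Rightarrow> ('k \<Rightarrow> 'm::ab_group_add \<Rightarrow> 'm) \<Rightarrow>
   ('g \<Rightarrow> 'g \<Rightarrow> 'g) \<Rightarrow> ('g \<Rightarrow> 'g) \<Rightarrow> ('g \<Rightarrow> 'm \<Rightarrow> 'm) \<Rightarrow> ('m \<Rightarrow> 'm) \<Rightarrow> bool" where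
  "nijenhuis_rep sg sm br P act PM \<longleftrightarrow>
     nijenhuis_lie sg br P \<and> lie_rep sg sm br act \<and> Vector_Spaces.linear sm sm PM \<and>
     (\<forall>a x. act (P a) (PM x) = PM (act (P a) x + act a (PM x) - PM (act a x)))"

definition cochain ::
  "('k::field \<Rightarrow> 'g::ab_group_add \<Rightarrow> 'g) \<Rightarrow> ('k \<Rightarrow> 'm::ab_group_add \<Rightarrow> 'm) \<Rightarrow>
   nat \<Rightarrow> ('g list \<Rightarrow> 'm) \<Rightarrow> bool" where
  "cochain sg sm n f \<longleftrightarrow>
     (\<forall>as i a b. length as = n \<longrightarrow> i < n \<longrightarrow>
        f (as[i := a + b]) = f (as[i := a]) + f (as[i := b])) \<and>
     (\<forall>as i c a. length as = n \<longrightarrow> i < n \<longrightarrow>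
        f (as[i := sg c a]) = sm c (f (as[i := a]))) \<and>
     (\<forall>as i j. length as = n \<longrightarrow> i < j \<longrightarrow> j < n \<longrightarrow> as ! i = as ! j \<longrightarrow> f as = 0)"

definition sgnp :: "nat \<Rightarrow> 'm::ab_group_add \<Rightarrow> 'm" where
  "sgnp i x = (if even i then x else - x)"

definition del :: "nat \<Rightarrow> 'a list \<Rightarrow> 'a list" where
  "del i as = take i as @ drop (Suc i) as"

text \<open>Chevalley--Eilenberg differential of bracket br with coefficients in action act,
  evaluated on a list as = (a_1,...,a_{n+1}) (0-indexed positions, signs adjusted).\<close>
definition CE_diff ::
  "('g \<Rightarrow> 'g \<Rightarrow> 'g) \<Rightarrow> ('g \<Rightarrow> 'm::ab_group_add \<Rightarrow> 'm) \<Rightarrow> ('g list \<Rightarrow> 'm) \<Rightarrow> ('g list \<Rightarrow> 'm)" where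
  "CE_diff br act f as =
     (\<Sum>i<length as. sgnp i (act (as ! i) (f (del i as))))
   + (\<Sum>j<length as. \<Sum>i<j. sgnp (i + j) (f (br (as ! i) (as ! j) # del i (del j as))))"

definition delta_Lie ::
  "('g \<Rightarrow> 'g \<Rightarrow> 'g) \<Rightarrow> ('g \<Rightarrow> 'm::ab_group_add \<Rightarrow> 'm) \<Rightarrow> ('g list \<Rightarrow> 'm) \<Rightarrow> ('g list \<Rightarrow> 'm)" where
  "delta_Lie br act f = CE_diff br act f"

definition bracketP :: "('g::ab_group_add \<Rightarrow> 'g \<Rightarrow> 'g) \<Rightarrow> ('g \<Rightarrow> 'g) \<Rightarrow> 'g \<Rightarrow> 'g \<Rightarrow> 'g" where
  "bracketP br P a b = br (P a) b + br a (P b) - P (br a b)"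

definition delta_NjO ::
  "('g::ab_group_add \<Rightarrow> 'g \<Rightarrow> 'g) \<Rightarrow> ('g \<Rightarrow> 'g) \<Rightarrow> ('g \<Rightarrow> 'm::ab_group_add \<Rightarrow> 'm) \<Rightarrow> ('m \<Rightarrow> 'm)
   \<Rightarrow> ('g list \<Rightarrow> 'm) \<Rightarrow> ('g list \<Rightarrow> 'm)" where
  "delta_NjO br P act PM f as =
     - PM (delta_Lie br act f as) + CE_diff (bracketP br P) (\<lambda>a x. act (P a) x) f as"

definition applyP_at :: "('g \<Rightarrow> 'g) \<Rightarrow> nat set \<Rightarrow> 'g list \<Rightarrow> 'g list" where
  "applyP_at P S as = map (\<lambda>i. if i \<in> S then P (as ! i) else as ! i) [0..<length as]"

definition Psi ::
  "('g \<Rightarrow> 'g) \<Rightarrow> ('m::ab_group_add \<Rightarrow> 'm) \<Rightarrow> ('g list \<Rightarrow> 'm) \<Rightarrow> ('g list \<Rightarrow> 'm)" where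
  "Psi P PM f as =
     (\<Sum>S | S \<subseteq> {..<length as}.
        sgnp (length as - card S) ((PM ^^ (length as - card S)) (f (applyP_at P S as))))"

end

theory Submission
  imports Defs
begin

text \<open>With Q = -P_M and subsets of positions encoded as boolean masks, \<Psi> f (a_1,...,a_n) is
  the sum over all masks of Q^k f(a'), where a' applies P at the marked positions and k counts
  the unmarked ones. Splitting this sum at the positions singled out by a term of \<delta>_Lie does
  the computation. For the action term of a = a_i, the two values of bit i give
  Q^k (P(a) y) + Q^(k+1) (a y) = Q^k (L y) with L x = P(a) x + Q (a x); the Nijenhuis
  representation identity says exactly that L commutes with Q, so these add up to L (\<Psi> f (...)).
  For the bracket term of a = a_i, b = a_j the four values of bits i, j give f at [Pa,Pb],
  [Pa,b], [a,Pb], [a,b]; the identities [Pa,Pb] = P[a,b]_P and [Pa,b] + [a,Pb] = [a,b]_P + P[a,b]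
  regroup them into the bracket terms of Q \<delta>_Lie \<Psi> f and \<partial> \<Psi> f.
  Only additivity (of P_M, of the action, and of f in one argument) is used.\<close>

lemma additive_funpow:
  fixes Q :: "'a::ab_group_add \<Rightarrow> 'a"
  shows "additive Q \<Longrightarrow> additive (Q ^^ k)"
  by (induction k) (simp_all add: additive_def)

lemma additive_comp: "additive g \<Longrightarrow> additive h \<Longrightarrow> additive (\<lambda>x. g (h x))"
  by (simp add: additive_def)

lemma additive_sgnp: "additive g \<Longrightarrow> g (sgnp i x) = sgnp i (g x)"
  by (simp add: sgnp_def additive.minus)

lemma sgnp_add: "sgnp i (x + y) = sgnp i x + sgnp i y"
  by (simp add: sgnp_def)

lemma sgnp_sum: "sgnp i (sum g A) = (\<Sum>x\<in>A. sgnp i (g x))"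
  by (simp add: sgnp_def sum_negf)

lemma sgnp_funpow:
  fixes PM :: "'a::ab_group_add \<Rightarrow> 'a"
  assumes "additive PM"
  shows "sgnp k ((PM ^^ k) x) = ((\<lambda>x. - PM x) ^^ k) x"
proof (induction k)
  case (Suc k)
  have "sgnp (Suc k) ((PM ^^ Suc k) x) = - PM (sgnp k ((PM ^^ k) x))"
    by (simp add: sgnp_def additive.minus[OF assms])
  then show ?case by (simp add: Suc.IH)
qed (simp add: sgnp_def)

definition insert_at :: "nat \<Rightarrow> 'a \<Rightarrow> 'a list \<Rightarrow> 'a list" where
  "insert_at i x xs = take i xs @ x # drop i xs"

lemma length_insert_at [simp]: "i \<le> length xs \<Longrightarrow> length (insert_at i x xs) = Suc (length xs)"
  by (simp add: insert_at_def)

lemma nth_insert_at [simp]: "i \<le> length xs \<Longrightarrow> insert_at i x xs ! i = x"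
  by (simp add: insert_at_def nth_append)

lemma nth_insert_at_less: "k < i \<Longrightarrow> i \<le> length xs \<Longrightarrow> insert_at i x xs ! k = xs ! k"
  by (simp add: insert_at_def nth_append)

lemma del_insert_at [simp]: "i \<le> length xs \<Longrightarrow> del i (insert_at i x xs) = xs"
  by (simp add: insert_at_def del_def)

lemma insert_at_del: "i < length xs \<Longrightarrow> insert_at i (xs ! i) (del i xs) = xs"
  by (simp add: insert_at_def del_def min_def Cons_nth_drop_Suc)

lemma length_del [simp]: "i < length xs \<Longrightarrow> length (del i xs) = length xs - 1"
  by (simp add: del_def)

lemma nth_del_less: "k < i \<Longrightarrow> i < length xs \<Longrightarrow> del i xs ! k = xs ! k"
  by (simp add: del_def nth_append)

lemma count_list_insert_at [simp]:
  "i \<le> length xs \<Longrightarrow> count_list (insert_at i x xs) y = count_list xs y + (if x = y then 1 else 0)"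
proof -
  have "count_list xs y = count_list (take i xs) y + count_list (drop i xs) y"
    by (metis append_take_drop_id count_list_append)
  then show ?thesis by (simp add: insert_at_def)
qed

lemma count_list_False_eq_length_filter_Not: "count_list bs False = length (filter Not bs)"
  by (induction bs) auto

lemma sum_lists_insert_at:
  assumes "i \<le> N"
  shows "(\<Sum>bs | length bs = Suc N. g bs)
       = (\<Sum>cs | length cs = N. g (insert_at i True cs) + g (insert_at i False cs))"
proof -
  have "(\<Sum>cs | length cs = N. g (insert_at i True cs) + g (insert_at i False cs))
      = (\<Sum>(cs, b) \<in> {cs. length cs = N} \<times> UNIV. g (insert_at i b cs))"
    by (simp add: sum.cartesian_product[symmetric] UNIV_bool add.commute)
  also have "\<dots> = (\<Sum>bs | length bs = Suc N. g bs)"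
    using assms
    by (intro sum.reindex_bij_witness[where i="\<lambda>bs. (del i bs, bs ! i)"
          and j="\<lambda>(cs, b). insert_at i b cs"]) (auto simp: insert_at_del)
  finally show ?thesis ..
qed

definition applyP_mask :: "('g \<Rightarrow> 'g) \<Rightarrow> bool list \<Rightarrow> 'g list \<Rightarrow> 'g list" where
  "applyP_mask P bs as = map2 (\<lambda>b a. if b then P a else a) bs as"

lemma length_applyP_mask [simp]: "length (applyP_mask P bs as) = min (length bs) (length as)"
  by (simp add: applyP_mask_def)

lemma del_applyP_mask:
  "length bs = length as \<Longrightarrow> del i (applyP_mask P bs as) = applyP_mask P (del i bs) (del i as)"
  by (simp add: applyP_mask_def del_def take_map drop_map take_zip drop_zip zip_append)

lemma applyP_mask_insert_at:
  assumes "length cs = n" "length as = Suc n" "i \<le> n"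
  shows "applyP_mask P (insert_at i b cs) as
       = insert_at i (if b then P (as ! i) else as ! i) (applyP_mask P cs (del i as))"
proof -
  have "applyP_mask P (insert_at i b cs) as
      = insert_at i (applyP_mask P (insert_at i b cs) as ! i)
          (del i (applyP_mask P (insert_at i b cs) as))"
    using assms by (simp add: insert_at_del)
  also have "applyP_mask P (insert_at i b cs) as ! i = (if b then P (as ! i) else as ! i)"
    using assms by (simp add: applyP_mask_def)
  also have "del i (applyP_mask P (insert_at i b cs) as) = applyP_mask P cs (del i as)"
    using assms by (simp add: del_applyP_mask)
  finally show ?thesis .
qed

definition mask_sum ::
  "('m::ab_group_add \<Rightarrow> 'm) \<Rightarrow> ('g \<Rightarrow> 'g) \<Rightarrow> ('g list \<Rightarrow> 'm) \<Rightarrow> 'g list \<Rightarrow> 'm" where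
  "mask_sum Q P f as =
     (\<Sum>bs | length bs = length as. (Q ^^ count_list bs False) (f (applyP_mask P bs as)))"

lemma Psi_eq_mask_sum:
  assumes "additive PM"
  shows "Psi P PM f as = mask_sum (\<lambda>x. - PM x) P f as"
  unfolding Psi_def mask_sum_def
proof (rule sym, rule sum.reindex_bij_witness[where j="\<lambda>bs. {i. i < length as \<and> bs ! i}"
      and i="\<lambda>S. map (\<lambda>i. i \<in> S) [0..<length as]"])
  fix bs :: "bool list" assume "bs \<in> {bs. length bs = length as}"
  then have len: "length bs = length as" by simp
  have "card {i. i < length as \<and> bs ! i} = length (filter id bs)"
    using len by (simp add: length_filter_conv_card)
  then have "length as - card {i. i < length as \<and> bs ! i} = count_list bs False"
    using len sum_length_filter_compl[of id bs] by (simp add: count_list_False_eq_length_filter_Not)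
  moreover have "applyP_at P {i. i < length as \<and> bs ! i} as = applyP_mask P bs as"
    using len by (intro nth_equalityI) (auto simp: applyP_at_def applyP_mask_def)
  ultimately show "sgnp (length as - card {i. i < length as \<and> bs ! i})
         ((PM ^^ (length as - card {i. i < length as \<and> bs ! i}))
           (f (applyP_at P {i. i < length as \<and> bs ! i} as)))
      = ((\<lambda>x. - PM x) ^^ count_list bs False) (f (applyP_mask P bs as))"
    using sgnp_funpow[OF assms] by simp
qed (auto intro: nth_equalityI)

lemma mask_sum_cong:
  "(\<And>bs. length bs = length as \<Longrightarrow> f bs = g bs) \<Longrightarrow> mask_sum Q P f as = mask_sum Q P g as"
  by (simp add: mask_sum_def)

lemma mask_sum_add:
  "additive Q \<Longrightarrow> mask_sum Q P (\<lambda>bs. f bs + g bs) as = mask_sum Q P f as + mask_sum Q P g as"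
  by (simp add: mask_sum_def additive.add[OF additive_funpow] sum.distrib)

lemma mask_sum_sum:
  "additive Q \<Longrightarrow> mask_sum Q P (\<lambda>bs. \<Sum>x\<in>X. f x bs) as = (\<Sum>x\<in>X. mask_sum Q P (f x) as)"
  by (simp add: mask_sum_def additive.sum[OF additive_funpow] sum.swap[of _ X])

lemma mask_sum_sgnp:
  "additive Q \<Longrightarrow> mask_sum Q P (\<lambda>bs. sgnp i (f bs)) as = sgnp i (mask_sum Q P f as)"
  by (simp add: mask_sum_def additive_sgnp[OF additive_funpow] sgnp_sum)

lemma mask_sum_Cons:
  "mask_sum Q P f (c # cs) = (\<Sum>ds | length ds = length cs.
     (Q ^^ count_list ds False) (f (P c # applyP_mask P ds cs))
     + (Q ^^ Suc (count_list ds False)) (f (c # applyP_mask P ds cs)))"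
  unfolding mask_sum_def by (simp add: sum_lists_insert_at[of 0] insert_at_def applyP_mask_def)

lemma mask_sum_action_term:
  fixes Q :: "'m::ab_group_add \<Rightarrow> 'm" and act :: "'g \<Rightarrow> 'm \<Rightarrow> 'm"
  assumes Q: "additive Q" and act: "additive (act a)" "additive (act (P a))"
    and commute: "\<And>x. act (P a) (Q x) + Q (act a (Q x)) = Q (act (P a) x + Q (act a x))"
    and len: "length as = Suc n" and i: "i < Suc n" and a: "as ! i = a"
  shows "mask_sum Q P (\<lambda>bs. act (bs ! i) (f (del i bs))) as
       = act (P a) (mask_sum Q P f (del i as)) + Q (act a (mask_sum Q P f (del i as)))"
proof -
  define L where "L x = act (P a) x + Q (act a x)" for x
  have L: "additive L"
    using Q act by (simp add: L_def additive_def)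
  have L_funpow: "L ((Q ^^ k) x) = (Q ^^ k) (L x)" for k x
    by (induction k) (simp_all add: L_def commute)
  let ?y = "\<lambda>cs. f (applyP_mask P cs (del i as))"
  have "mask_sum Q P (\<lambda>bs. act (bs ! i) (f (del i bs))) as
      = (\<Sum>cs | length cs = n. (Q ^^ count_list cs False) (act (P a) (?y cs))
                              + (Q ^^ Suc (count_list cs False)) (act a (?y cs)))"
    unfolding mask_sum_def len using i len a
    by (simp add: sum_lists_insert_at[of i n] applyP_mask_insert_at)
  also have "\<dots> = (\<Sum>cs | length cs = n. (Q ^^ count_list cs False) (L (?y cs)))"
    by (simp add: L_def additive.add[OF additive_funpow[OF Q]] funpow_swap1)
  also have "\<dots> = (\<Sum>cs | length cs = n. L ((Q ^^ count_list cs False) (?y cs)))"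
    by (simp add: L_funpow)
  also have "\<dots> = L (mask_sum Q P f (del i as))"
    using i len by (simp add: mask_sum_def additive.sum[OF L])
  finally show ?thesis by (simp add: L_def)
qed

lemma nijenhuis_bracket_regroup:
  fixes Q :: "'m::ab_group_add \<Rightarrow> 'm" and T :: "'g::ab_group_add \<Rightarrow> 'm"
  assumes Q: "additive Q" and T: "additive T"
    and nijenhuis: "br (P a) (P b) = P (bracketP br P a b)"
  shows "T (br (P a) (P b)) + Q (T (br (P a) b)) + (Q (T (br a (P b))) + Q (Q (T (br a b))))
       = Q (T (P (br a b)) + Q (T (br a b)))
         + (T (P (bracketP br P a b)) + Q (T (bracketP br P a b)))"
proof -
  have "br (P a) b + br a (P b) = P (br a b) + bracketP br P a b"
    by (simp add: bracketP_def)
  then have middle: "Q (T (br (P a) b)) + Q (T (br a (P b)))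
      = Q (T (P (br a b))) + Q (T (bracketP br P a b))"
    by (metis additive.add[OF Q] additive.add[OF T])
  have "T (br (P a) (P b)) + Q (T (br (P a) b)) + (Q (T (br a (P b))) + Q (Q (T (br a b))))
      = T (P (bracketP br P a b)) + (Q (T (br (P a) b)) + Q (T (br a (P b))))
        + Q (Q (T (br a b)))"
    by (simp only: nijenhuis add.assoc)
  also have "\<dots> = T (P (bracketP br P a b)) + (Q (T (P (br a b))) + Q (T (bracketP br P a b)))
        + Q (Q (T (br a b)))"
    by (simp only: middle)
  finally show ?thesis
    by (simp only: additive.add[OF Q] ac_simps)
qed

lemma mask_sum_bracket_term:
  fixes Q :: "'m::ab_group_add \<Rightarrow> 'm" and f :: "'g::ab_group_add list \<Rightarrow> 'm"
  assumes Q: "additive Q"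
    and f: "\<And>u v ys. length ys = m \<Longrightarrow> f ((u + v) # ys) = f (u # ys) + f (v # ys)"
    and nijenhuis: "\<And>a b. br (P a) (P b) = P (bracketP br P a b)"
    and len: "length as = Suc (Suc m)" and ij: "i < j" "j < Suc (Suc m)"
  shows "mask_sum Q P (\<lambda>bs. f (br (bs ! i) (bs ! j) # del i (del j bs))) as
       = Q (mask_sum Q P f (br (as ! i) (as ! j) # del i (del j as)))
         + mask_sum Q P f (bracketP br P (as ! i) (as ! j) # del i (del j as))"
proof -
  define a b rest where "a = as ! i" and "b = as ! j" and "rest = del i (del j as)"
  have rest: "length rest = m"
    using len ij by (simp add: rest_def)
  define F where "F ds u = f (u # applyP_mask P ds rest)" for ds u
  have F: "additive (F ds)" if "length ds = m" for ds
    using that rest by (simp add: additive_def F_def f)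
  define S where "S ds c = (Q ^^ count_list ds False) (F ds (P c))
                          + (Q ^^ Suc (count_list ds False)) (F ds c)" for ds c
  have "mask_sum Q P (\<lambda>bs. f (br (bs ! i) (bs ! j) # del i (del j bs))) as
      = (\<Sum>ds | length ds = m.
            (Q ^^ count_list ds False) (F ds (br (P a) (P b)))
          + (Q ^^ Suc (count_list ds False)) (F ds (br (P a) b))
          + ((Q ^^ Suc (count_list ds False)) (F ds (br a (P b)))
          + (Q ^^ Suc (Suc (count_list ds False))) (F ds (br a b))))"
    unfolding mask_sum_def len using ij len
    by (simp add: sum_lists_insert_at[of j "Suc m"] sum_lists_insert_at[of i m]
        applyP_mask_insert_at nth_insert_at_less nth_del_less a_def b_def rest_def F_def)
  also have "\<dots> = (\<Sum>ds | length ds = m. Q (S ds (br a b)) + S ds (bracketP br P a b))"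
  proof (rule sum.cong)
    fix ds :: "bool list" assume "ds \<in> {ds. length ds = m}"
    then have "additive (\<lambda>u. (Q ^^ count_list ds False) (F ds u))"
      by (intro additive_comp[OF additive_funpow[OF Q] F]) simp
    from nijenhuis_bracket_regroup[where br=br and P=P and a=a and b=b, OF Q this nijenhuis]
    show "(Q ^^ count_list ds False) (F ds (br (P a) (P b)))
          + (Q ^^ Suc (count_list ds False)) (F ds (br (P a) b))
          + ((Q ^^ Suc (count_list ds False)) (F ds (br a (P b)))
          + (Q ^^ Suc (Suc (count_list ds False))) (F ds (br a b)))
        = Q (S ds (br a b)) + S ds (bracketP br P a b)"
      by (simp add: S_def)
  qed simp
  also have "\<dots> = Q (mask_sum Q P f (br a b # rest)) + mask_sum Q P f (bracketP br P a b # rest)"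
    by (simp only: mask_sum_Cons rest S_def F_def additive.sum[OF Q]) (simp add: sum.distrib)
  finally show ?thesis by (simp add: a_def b_def rest_def)
qed

lemma mask_sum_CE_diff:
  fixes Q :: "'m::ab_group_add \<Rightarrow> 'm" and f :: "'g::ab_group_add list \<Rightarrow> 'm"
  assumes Q: "additive Q" and act: "\<And>a. additive (act a)"
    and commute: "\<And>a x. act (P a) (Q x) + Q (act a (Q x)) = Q (act (P a) x + Q (act a x))"
    and nijenhuis: "\<And>a b. br (P a) (P b) = P (bracketP br P a b)"
    and f: "\<And>u v ys. Suc (length ys) = n \<Longrightarrow> f ((u + v) # ys) = f (u # ys) + f (v # ys)"
    and len: "length as = Suc n"
  shows "mask_sum Q P (CE_diff br act f) as
       = Q (CE_diff br act (mask_sum Q P f) as)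
         + CE_diff (bracketP br P) (\<lambda>a. act (P a)) (mask_sum Q P f) as"
proof -
  let ?\<Psi> = "mask_sum Q P f"
  have action: "mask_sum Q P (\<lambda>bs. act (bs ! i) (f (del i bs))) as
      = act (P (as ! i)) (?\<Psi> (del i as)) + Q (act (as ! i) (?\<Psi> (del i as)))"
    if "i < Suc n" for i
    by (rule mask_sum_action_term[where a="as ! i" and P=P and act=act,
          OF Q act act commute len that refl])
  have bracket: "mask_sum Q P (\<lambda>bs. f (br (bs ! i) (bs ! j) # del i (del j bs))) as
      = Q (?\<Psi> (br (as ! i) (as ! j) # del i (del j as)))
        + ?\<Psi> (bracketP br P (as ! i) (as ! j) # del i (del j as))"
    if ij: "i < j" "j < Suc n" for i j
  proof -
    obtain m where "n = Suc m" using ij by (cases n) auto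
    then show ?thesis
      using ij len
      by (intro mask_sum_bracket_term[where br=br and P=P, OF Q _ nijenhuis]) (simp_all add: f)
  qed
  have "mask_sum Q P (CE_diff br act f) as
      = mask_sum Q P (\<lambda>bs. (\<Sum>i<Suc n. sgnp i (act (bs ! i) (f (del i bs))))
          + (\<Sum>j<Suc n. \<Sum>i<j. sgnp (i + j) (f (br (bs ! i) (bs ! j) # del i (del j bs))))) as"
    using len by (intro mask_sum_cong) (simp add: CE_diff_def)
  also have "\<dots> = (\<Sum>i<Suc n. sgnp i (act (P (as ! i)) (?\<Psi> (del i as))
                                       + Q (act (as ! i) (?\<Psi> (del i as)))))
      + (\<Sum>j<Suc n. \<Sum>i<j. sgnp (i + j) (Q (?\<Psi> (br (as ! i) (as ! j) # del i (del j as)))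
        + ?\<Psi> (bracketP br P (as ! i) (as ! j) # del i (del j as))))"
    by (simp add: mask_sum_add mask_sum_sum mask_sum_sgnp Q action bracket)
  also have "\<dots> = Q (CE_diff br act ?\<Psi> as) + CE_diff (bracketP br P) (\<lambda>a. act (P a)) ?\<Psi> as"
    by (simp add: CE_diff_def len additive.add[OF Q] additive.sum[OF Q] additive_sgnp[OF Q]
        sgnp_add sum.distrib)
  finally show ?thesis .
qed

lemma cochain_additive_first:
  assumes "cochain sg sm n f" and "Suc (length ys) = n"
  shows "f ((u + v) # ys) = f (u # ys) + f (v # ys)"
  using assms(1)[unfolded cochain_def, THEN conjunct1, rule_format, of "u # ys" 0 u v] assms(2)
  by simp

lemma linear_imp_additive: "Vector_Spaces.linear s1 s2 f \<Longrightarrow> additive f"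
  by (simp add: Vector_Spaces.linear_iff additive_def)

lemma nijenhuis_rep_additive:
  assumes "nijenhuis_rep sg sm br P act PM"
  shows "additive PM" and "additive (act a)"
  using assms linear_imp_additive unfolding nijenhuis_rep_def lie_rep_def by blast+

lemma nijenhuis_rep_commute:
  assumes "nijenhuis_rep sg sm br P act PM"
  shows "act (P a) (- PM x) + - PM (act a (- PM x)) = - PM (act (P a) x + - PM (act a x))"
proof -
  note PM = nijenhuis_rep_additive(1)[OF assms]
    and act = nijenhuis_rep_additive(2)[OF assms, of a]
      nijenhuis_rep_additive(2)[OF assms, of "P a"]
  have "act (P a) (PM x) = PM (act (P a) x + act a (PM x) - PM (act a x))"
    using assms by (simp add: nijenhuis_rep_def)
  then show ?thesis
    by (simp add: additive.minus[OF PM] additive.minus[OF act(1)] additive.minus[OF act(2)]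
        additive.add[OF PM] additive.diff[OF PM])
qed

theorem proposition6p3:
  fixes sg :: "'k::field_char_0 \<Rightarrow> 'g::ab_group_add \<Rightarrow> 'g"
    and sm :: "'k \<Rightarrow> 'm::ab_group_add \<Rightarrow> 'm"
    and br :: "'g \<Rightarrow> 'g \<Rightarrow> 'g" and P :: "'g \<Rightarrow> 'g"
    and act :: "'g \<Rightarrow> 'm \<Rightarrow> 'm" and PM :: "'m \<Rightarrow> 'm"
    and f :: "'g list \<Rightarrow> 'm" and n :: nat
  assumes "nijenhuis_rep sg sm br P act PM"
    and "cochain sg sm n f"
    and "length as = Suc n"
  shows "Psi P PM (delta_Lie br act f) as = delta_NjO br P act PM (Psi P PM f) as"
proof -
  note PM = nijenhuis_rep_additive(1)[OF assms(1)]
    and act = nijenhuis_rep_additive(2)[OF assms(1)]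
  have Q: "additive (\<lambda>x. - PM x)"
    by (simp add: additive_def additive.add[OF PM])
  have nijenhuis: "br (P a) (P b) = P (bracketP br P a b)" for a b
    using assms(1) by (simp add: nijenhuis_rep_def nijenhuis_lie_def bracketP_def)
  have Psi_eq: "Psi P PM g = mask_sum (\<lambda>x. - PM x) P g" for g
    using Psi_eq_mask_sum[OF PM] by blast
  show ?thesis
    unfolding Psi_eq delta_NjO_def delta_Lie_def
    by (rule mask_sum_CE_diff[where P=P and act=act, OF Q act nijenhuis_rep_commute[OF assms(1)]
          nijenhuis cochain_additive_first[OF assms(2)] assms(3)])
qed

end
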